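(* Let $U(y)=\sum_{k\in\mathbb Z^m_+,\ \max_jk_j\le n}c_ky^k$ be a polynomial in $m$ variables with complex coefficients of degree at most $n$ in each variable. (a) If $0<A<B$, then $$\sum_k|c_k|\le\Big[T_n\Big(\frac{B+A+2}{B-A}\Big)\Big]^m\|U\|_{C([A,B]^m)}.$$ (b) If $b>0$, then $$\sum_k|c_k|\le\Big(\frac{e^{b/4}+e^{-b/4}}{e^{b/4}-e^{-b/4}}\Big)^{mn}\|U\|_{C([e^{-b},e^b]^m)}.$$
   Context: $T_n(u)=\frac12((u+\sqrt{u^2-1})^n+(u-\sqrt{u^2-1})^n)$ is the Chebyshev polynomial of the first kind; $[A,B]^m$ is the cube $\{y\in\mathbb R^m:A\le y_j\le B\ \forall j\}$; $y^k=\prod_jy_j^{k_j}$; $\|U\|_{C(S)}=\max_S|U|$. *)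

theory Defs
  imports "HOL-Analysis.Analysis"
begin

text \<open>Chebyshev polynomial of the first kind, via the closed formula from the paper
  (valid for real arguments u \<ge> 1, which is the only range used).\<close>
definition cheb_T :: "nat \<Rightarrow> real \<Rightarrow> real" where
  "cheb_T n u = ((u + sqrt (u^2 - 1)) ^ n + (u - sqrt (u^2 - 1)) ^ n) / 2"

definition multi_idx :: "nat \<Rightarrow> nat \<Rightarrow> (nat \<Rightarrow> nat) set" where
  "multi_idx m n = PiE {..<m} (\<lambda>_. {..n})"

definition mpoly_eval :: "nat \<Rightarrow> nat \<Rightarrow> ((nat \<Rightarrow> nat) \<Rightarrow> complex) \<Rightarrow> (nat \<Rightarrow> real) \<Rightarrow> complex" where
  "mpoly_eval m n c y = (\<Sum>k\<in>multi_idx m n. c k * (\<Prod>j<m. complex_of_real (y j ^ k j)))"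

definition cube :: "nat \<Rightarrow> real \<Rightarrow> real \<Rightarrow> (nat \<Rightarrow> real) set" where
  "cube m A B = PiE {..<m} (\<lambda>_. {A..B})"

definition sup_norm :: "((nat \<Rightarrow> real) \<Rightarrow> complex) \<Rightarrow> (nat \<Rightarrow> real) set \<Rightarrow> real" where
  "sup_norm U S = Sup ((\<lambda>y. cmod (U y)) ` S)"

end

theory Submission
  imports Defs "HOL-Computational_Algebra.Polynomial"
begin

text \<open>Interpolate \<open>U\<close> in each variable at the affine images \<open>y\<^sub>0, ..., y\<^sub>n \<in> [A, B]\<close> of the
  Chebyshev extremal points \<open>cos (i \<pi> / n)\<close>. With \<open>L\<^sub>i\<close> the Lagrange basis of these nodes,
  \<open>c\<^sub>k = \<Sum>\<^sub>g U(y\<^sub>g) \<Prod>\<^sub>j coeff(L\<^bsub>g j\<^esub>, k\<^sub>j)\<close>, so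
  \<open>\<Sum>\<^sub>k |c\<^sub>k| \<le> (\<Sum>\<^sub>i \<Sum>\<^sub>l |coeff(L\<^sub>i, l)|)\<^sup>m \<parallel>U\<parallel>\<close>.
  Since all nodes are positive, the coefficients of \<open>L\<^sub>i\<close> alternate in sign, so
  \<open>\<Sum>\<^sub>l |coeff(L\<^sub>i, l)| = |L\<^sub>i(-1)|\<close>. The affine map of \<open>[A, B]\<close> onto \<open>[-1, 1]\<close> sends \<open>-1\<close> to
  \<open>-u\<close> with \<open>u = (B + A + 2) / (B - A) > 1\<close>, and \<open>\<Sum>\<^sub>i |L\<^sub>i(-u)| = T\<^sub>n(u)\<close>: interpolating
  \<open>T\<^sub>n\<close>, which is \<open>(-1)\<^sup>i\<close> at the \<open>i\<close>-th node, gives \<open>T\<^sub>n(-u) = \<Sum>\<^sub>i (-1)\<^sup>i L\<^sub>i(-u)\<close>, a sum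
  of terms of equal sign. For (b), \<open>A = e\<^sup>-\<^sup>b\<close> and \<open>B = e\<^sup>b\<close> give \<open>u = coth (b/2)\<close>, and
  \<open>T\<^sub>n(u) \<le> (u + \<surd>(u\<^sup>2 - 1))\<^sup>n = coth (b/4)\<^sup>n\<close>.\<close>

section \<open>Lagrange interpolation\<close>

definition lagrange_basis :: "(nat \<Rightarrow> 'a::field) \<Rightarrow> nat \<Rightarrow> nat \<Rightarrow> 'a poly" where
  "lagrange_basis x n i =
     smult (\<Prod>j\<in>{..n}-{i}. 1 / (x i - x j)) (\<Prod>j\<in>{..n}-{i}. [:- x j, 1:])"

lemma poly_lagrange_basis:
  "poly (lagrange_basis x n i) t = (\<Prod>j\<in>{..n}-{i}. (t - x j) / (x i - x j))"
  by (simp add: lagrange_basis_def poly_prod prod.distrib[symmetric])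

lemma degree_prod_linear_factors:
  fixes x :: "'b \<Rightarrow> 'a::idom"
  shows "degree (\<Prod>j\<in>S. [:- x j, 1:]) = card S"
  by (simp add: degree_prod_eq_sum_degree)

lemma degree_lagrange_basis:
  assumes "i \<le> n"
  shows "degree (lagrange_basis x n i) \<le> n"
  unfolding lagrange_basis_def
  using assms by (intro order_trans[OF degree_smult_le]) (simp add: degree_prod_linear_factors)

lemma poly_lagrange_basis_node:
  assumes "inj_on x {..n}" "i \<le> n" "k \<le> n"
  shows "poly (lagrange_basis x n i) (x k) = (if k = i then 1 else 0)"
proof (cases "k = i")
  case True
  have "x i - x j \<noteq> 0" if "j \<in> {..n}-{i}" for j
    using assms(1,2) that by (auto dest: inj_onD)
  then show ?thesis
    using True by (simp add: poly_lagrange_basis)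
next
  case False
  then show ?thesis
    using assms(3) by (auto simp: poly_lagrange_basis intro!: prod_zero bexI[of _ k])
qed

lemma lagrange_interpolation:
  assumes "inj_on x {..n}" "degree p \<le> n"
  shows "p = (\<Sum>i\<le>n. smult (poly p (x i)) (lagrange_basis x n i))"
proof (rule poly_eqI_degree[where A = "x ` {..n}"])
  have card: "card (x ` {..n}) = Suc n"
    using assms(1) by (simp add: card_image)
  show "degree p < card (x ` {..n})"
    using card assms(2) by simp
  have "degree (\<Sum>i\<le>n. smult (poly p (x i)) (lagrange_basis x n i)) \<le> n"
    by (intro degree_sum_le order_trans[OF degree_smult_le] degree_lagrange_basis) auto
  then show "degree (\<Sum>i\<le>n. smult (poly p (x i)) (lagrange_basis x n i)) < card (x ` {..n})"
    using card by simp
  fix t assume "t \<in> x ` {..n}"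
  then obtain k where k: "k \<le> n" "t = x k"
    by auto
  then show "poly p t = poly (\<Sum>i\<le>n. smult (poly p (x i)) (lagrange_basis x n i)) t"
    by (simp add: poly_sum poly_lagrange_basis_node[OF assms(1)] if_distrib[of "(*) _"]
        cong: if_cong)
qed

lemma sum_power_mult_coeff_lagrange_basis:
  assumes "inj_on x {..n}" "k \<le> n"
  shows "(\<Sum>i\<le>n. x i ^ k * coeff (lagrange_basis x n i) l) = (if k = l then 1 else 0)"
proof -
  have "monom 1 k = (\<Sum>i\<le>n. smult (poly (monom 1 k) (x i)) (lagrange_basis x n i))"
    using assms by (intro lagrange_interpolation) (auto simp: degree_monom_eq)
  from arg_cong[where f = "\<lambda>p. coeff p l", OF this] show ?thesis
    by (simp add: coeff_sum poly_monom)
qed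

lemma poly_lagrange_basis_affine:
  assumes "h \<noteq> 0"
  shows "poly (lagrange_basis (\<lambda>j. h * x j + c) n i) (h * t + c) = poly (lagrange_basis x n i) t"
proof -
  have "(h * t + c - (h * x j + c)) / (h * x i + c - (h * x j + c)) = (t - x j) / (x i - x j)" for j
    using assms by (simp flip: right_diff_distrib)
  then show ?thesis
    by (simp add: poly_lagrange_basis)
qed

lemma lagrange_basis_sign_left:
  fixes x :: "nat \<Rightarrow> real"
  assumes decreasing: "\<And>i j. i < j \<Longrightarrow> j \<le> n \<Longrightarrow> x j < x i"
    and left: "\<And>j. j \<le> n \<Longrightarrow> t < x j" and "i \<le> n"
  shows "0 \<le> (-1) ^ (n - i) * poly (lagrange_basis x n i) t"
proof -
  define f where "f j = (t - x j) / (x i - x j)" for j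
  have "{..n}-{i} = {..<i} \<union> {i<..n}"
    using \<open>i \<le> n\<close> by auto
  then have "poly (lagrange_basis x n i) t = (\<Prod>j\<in>{..<i} \<union> {i<..n}. f j)"
    by (simp add: poly_lagrange_basis f_def)
  also have "\<dots> = (\<Prod>j<i. f j) * (\<Prod>j\<in>{i<..n}. f j)"
    by (rule prod.union_disjoint) auto
  also have "(\<Prod>j\<in>{i<..n}. f j) = (-1) ^ (n - i) * (\<Prod>j\<in>{i<..n}. - f j)"
    by (simp add: prod_uminus)
  finally have "(-1) ^ (n - i) * poly (lagrange_basis x n i) t
      = (\<Prod>j<i. f j) * (\<Prod>j\<in>{i<..n}. - f j)"
    by (simp add: mult_ac flip: power_add)
  moreover have "0 \<le> (\<Prod>j<i. f j)"
  proof (rule prod_nonneg)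
    fix j assume "j \<in> {..<i}"
    then show "0 \<le> f j"
      using decreasing[of j i] left[of j] \<open>i \<le> n\<close> by (simp add: f_def divide_nonpos_nonpos)
  qed
  moreover have "0 \<le> (\<Prod>j\<in>{i<..n}. - f j)"
  proof (rule prod_nonneg)
    fix j assume "j \<in> {i<..n}"
    then show "0 \<le> - f j"
      using decreasing[of i j] left[of j] by (simp add: f_def divide_nonpos_nonneg)
  qed
  ultimately show ?thesis
    by simp
qed

lemma coeff_prod_linear_alternating:
  fixes r :: "'b \<Rightarrow> real"
  assumes "finite S" "\<And>j. j \<in> S \<Longrightarrow> 0 \<le> r j"
  shows "0 \<le> (-1) ^ (card S + l) * coeff (\<Prod>j\<in>S. [:- r j, 1:]) l"
  using assms
proof (induction S arbitrary: l rule: finite_induct)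
  case empty
  then show ?case
    by simp
next
  case (insert a S)
  define q where "q = (\<Prod>j\<in>S. [:- r j, 1:])"
  have IH: "0 \<le> (-1) ^ (card S + k) * coeff q k" for k
    using insert by (simp add: q_def)
  have "(-1) ^ (card (insert a S) + l) * coeff (\<Prod>j\<in>insert a S. [:- r j, 1:]) l
      = r a * ((-1) ^ (card S + l) * coeff q l) + (-1) ^ (card S + Suc l) * coeff (pCons 0 q) l"
    using insert by (simp add: q_def algebra_simps)
  moreover have "0 \<le> (-1) ^ (card S + Suc l) * coeff (pCons 0 q) l"
    using IH by (cases l) simp_all
  moreover have "0 \<le> r a * ((-1) ^ (card S + l) * coeff q l)"
    using IH insert.prems by simp
  ultimately show ?case
    by simp
qed

lemma sum_abs_coeff_alternating:
  fixes q :: "real poly"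
  assumes "\<And>l. 0 \<le> (-1) ^ (s + l) * coeff q l" "degree q \<le> N"
  shows "(\<Sum>l\<le>N. \<bar>coeff q l\<bar>) = \<bar>poly q (-1)\<bar>"
proof -
  have "\<bar>coeff q l\<bar> = (-1) ^ s * (coeff q l * (-1) ^ l)" for l
  proof -
    have "\<bar>coeff q l\<bar> = \<bar>(-1) ^ (s + l) * coeff q l\<bar>"
      by (simp add: abs_mult power_abs)
    also have "\<dots> = (-1) ^ (s + l) * coeff q l"
      using assms(1) by simp
    finally show ?thesis
      by (simp add: power_add mult_ac)
  qed
  then have "(\<Sum>l\<le>N. \<bar>coeff q l\<bar>) = (-1) ^ s * (\<Sum>l\<le>N. coeff q l * (-1) ^ l)"
    by (simp add: sum_distrib_left)
  also have "(\<Sum>l\<le>N. coeff q l * (-1) ^ l) = poly q (-1)"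
    using assms(2) by (simp add: poly_altdef sum.mono_neutral_right coeff_eq_0)
  finally have "(\<Sum>l\<le>N. \<bar>coeff q l\<bar>) = (-1) ^ s * poly q (-1)" .
  moreover have "(\<Sum>l\<le>N. \<bar>coeff q l\<bar>) = \<bar>\<Sum>l\<le>N. \<bar>coeff q l\<bar>\<bar>"
    by (simp add: sum_nonneg)
  ultimately show ?thesis
    by (simp add: abs_mult)
qed

lemma sum_abs_coeff_lagrange_basis:
  fixes x :: "nat \<Rightarrow> real"
  assumes "\<And>j. j \<le> n \<Longrightarrow> 0 \<le> x j" "i \<le> n"
  shows "(\<Sum>l\<le>n. \<bar>coeff (lagrange_basis x n i) l\<bar>) = \<bar>poly (lagrange_basis x n i) (-1)\<bar>"
proof -
  define e where "e = (\<Prod>j\<in>{..n}-{i}. 1 / (x i - x j))"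
  define q where "q = (\<Prod>j\<in>{..n}-{i}. [:- x j, 1:])"
  have "lagrange_basis x n i = smult e q"
    by (simp add: lagrange_basis_def e_def q_def)
  moreover have "(\<Sum>l\<le>n. \<bar>coeff q l\<bar>) = \<bar>poly q (-1)\<bar>"
  proof (rule sum_abs_coeff_alternating)
    show "0 \<le> (-1) ^ (card ({..n}-{i}) + l) * coeff q l" for l
      unfolding q_def using assms(1) by (intro coeff_prod_linear_alternating) auto
    show "degree q \<le> n"
      using assms(2) by (simp add: q_def degree_prod_linear_factors)
  qed
  ultimately show ?thesis
    by (simp add: abs_mult flip: sum_distrib_left)
qed

section \<open>Chebyshev polynomials and nodes\<close>

fun cheb_poly :: "nat \<Rightarrow> 'a::comm_ring_1 poly" where
  "cheb_poly 0 = 1"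
| "cheb_poly (Suc 0) = [:0, 1:]"
| "cheb_poly (Suc (Suc n)) = [:0, 2:] * cheb_poly (Suc n) - cheb_poly n"

lemma degree_cheb_poly: "degree (cheb_poly n :: 'a::comm_ring_1 poly) \<le> n"
proof (induction n rule: cheb_poly.induct)
  case (3 n)
  have "degree (smult 2 (cheb_poly (Suc n) :: 'a poly)) \<le> Suc n"
    using 3(1) by (rule order_trans[OF degree_smult_le])
  then have "degree ([:0, 2:] * cheb_poly (Suc n) :: 'a poly) \<le> Suc (Suc n)"
    by simp
  then show ?case
    using 3 by (simp add: degree_diff_le)
qed auto

lemma poly_cheb_poly_cos: "poly (cheb_poly n) (cos t) = cos (real n * t)"
proof (induction n rule: cheb_poly.induct)
  case (3 n)
  have "cos (real (Suc (Suc n)) * t) + cos (real n * t) = 2 * cos t * cos (real (Suc n) * t)"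
    using cos_add[of "real (Suc n) * t" t] cos_diff[of "real (Suc n) * t" t]
    by (simp add: algebra_simps)
  then show ?case
    using 3 by (simp add: algebra_simps)
qed auto

lemma poly_cheb_poly_eq_cheb_T:
  assumes "1 \<le> w\<^sup>2"
  shows "poly (cheb_poly n) w = cheb_T n w"
proof -
  define s where "s = sqrt (w\<^sup>2 - 1)"
  have "s\<^sup>2 = w\<^sup>2 - 1"
    using assms by (simp add: s_def)
  then have square_plus: "(w + s)\<^sup>2 = 2 * w * (w + s) - 1"
    and square_minus: "(w - s)\<^sup>2 = 2 * w * (w - s) - 1"
    by (simp_all add: power2_eq_square algebra_simps)
  have recurrence: "z ^ Suc (Suc k) = 2 * w * z ^ Suc k - z ^ k" if "z\<^sup>2 = 2 * w * z - 1" for z k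
  proof -
    have "z ^ Suc (Suc k) = z ^ k * z\<^sup>2"
      by (simp add: power2_eq_square)
    also have "\<dots> = z ^ k * (2 * w * z - 1)"
      by (simp only: that)
    also have "\<dots> = 2 * w * z ^ Suc k - z ^ k"
      by (simp add: algebra_simps)
    finally show ?thesis .
  qed
  have closed_form: "cheb_T k w = ((w + s) ^ k + (w - s) ^ k) / 2" for k
    by (simp add: cheb_T_def s_def)
  show ?thesis
  proof (induction n rule: cheb_poly.induct)
    case (3 n)
    have "poly (cheb_poly (Suc (Suc n))) w
        = 2 * w * poly (cheb_poly (Suc n)) w - poly (cheb_poly n) w"
      by simp
    also have "\<dots> = 2 * w * (((w + s) ^ Suc n + (w - s) ^ Suc n) / 2)
                     - ((w + s) ^ n + (w - s) ^ n) / 2"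
      using 3 by (simp only: closed_form)
    also have "\<dots> = ((2 * w * (w + s) ^ Suc n - (w + s) ^ n)
                     + (2 * w * (w - s) ^ Suc n - (w - s) ^ n)) / 2"
      by argo
    also have "\<dots> = cheb_T (Suc (Suc n)) w"
      by (simp only: closed_form recurrence[OF square_plus] recurrence[OF square_minus])
    finally show ?case .
  qed (simp_all add: closed_form)
qed

lemma cheb_T_minus: "cheb_T n (- u) = (-1) ^ n * cheb_T n u"
  by (simp add: cheb_T_def power_minus[of "u - _", symmetric] power_minus[of "u + _", symmetric]
      algebra_simps)

lemma
  assumes "1 \<le> u"
  shows cheb_T_nonneg: "0 \<le> cheb_T n u"
    and cheb_T_le: "cheb_T n u \<le> (u + sqrt (u\<^sup>2 - 1)) ^ n"
proof -
  have "0 \<le> sqrt (u\<^sup>2 - 1)" "sqrt (u\<^sup>2 - 1) \<le> u"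
    using assms by (auto simp: real_sqrt_le_iff' power_mono)
  then have "0 \<le> (u - sqrt (u\<^sup>2 - 1)) ^ n" "(u - sqrt (u\<^sup>2 - 1)) ^ n \<le> (u + sqrt (u\<^sup>2 - 1)) ^ n"
    by (auto intro: power_mono)
  then show "0 \<le> cheb_T n u" "cheb_T n u \<le> (u + sqrt (u\<^sup>2 - 1)) ^ n"
    unfolding cheb_T_def by (auto intro: order_trans)
qed

lemma coth_eq_exp:
  fixes x :: real
  shows "(exp x + exp (- x)) / (exp x - exp (- x)) = cosh x / sinh x"
  by (simp add: cosh_field_def sinh_field_def field_split_simps)

lemma cosh_plus_one_div_sinh:
  fixes x :: real
  assumes "x \<noteq> 0"
  shows "(cosh x + 1) / sinh x = cosh (x / 2) / sinh (x / 2)"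
proof -
  have "cosh x + 1 = 2 * cosh (x / 2) * cosh (x / 2)"
    using cosh_double[of "x / 2"] cosh_square_eq[of "x / 2"] by (simp add: power2_eq_square)
  moreover have "sinh x = 2 * sinh (x / 2) * cosh (x / 2)"
    using sinh_double[of "x / 2"] by simp
  ultimately show ?thesis
    using assms by simp
qed

lemma one_le_coth:
  fixes x :: real
  assumes "0 < x"
  shows "1 \<le> cosh x / sinh x"
  using assms sinh_le_cosh_real[of x] by simp

lemma cheb_T_coth_le:
  fixes x :: real
  assumes "0 < x"
  shows "cheb_T n (cosh x / sinh x) \<le> (cosh (x / 2) / sinh (x / 2)) ^ n"
proof -
  have "(cosh x / sinh x)\<^sup>2 - 1 = (1 / sinh x)\<^sup>2"
    using assms by (simp add: field_simps cosh_square_eq)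
  then have "cosh x / sinh x + sqrt ((cosh x / sinh x)\<^sup>2 - 1) = (cosh x + 1) / sinh x"
    using assms by (simp add: add_divide_distrib)
  also have "\<dots> = cosh (x / 2) / sinh (x / 2)"
    using assms by (simp add: cosh_plus_one_div_sinh)
  finally show ?thesis
    using cheb_T_le[OF one_le_coth[OF assms]] by simp
qed

definition cheb_node :: "nat \<Rightarrow> nat \<Rightarrow> real" where
  "cheb_node n i = cos (real i * pi / real n)"

lemma cheb_node_strict_decreasing:
  assumes "i < j" "j \<le> n"
  shows "cheb_node n j < cheb_node n i"
proof -
  have "real i * pi / real n < real j * pi / real n" "real j * pi / real n \<le> pi"
    using assms by (simp_all add: divide_strict_right_mono field_simps)
  then show ?thesis
    unfolding cheb_node_def by (intro cos_monotone_0_pi) simp_all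
qed

lemma inj_on_cheb_node: "inj_on (cheb_node n) {..n}"
  by (rule inj_onI) (metis atMost_iff cheb_node_strict_decreasing less_irrefl linorder_neqE_nat)

lemma poly_cheb_poly_cheb_node:
  assumes "i \<le> n"
  shows "poly (cheb_poly n) (cheb_node n i) = (-1) ^ i"
  using assms by (cases "n = 0") (simp_all add: cheb_node_def poly_cheb_poly_cos)

lemma sum_abs_lagrange_cheb_node:
  assumes "1 < u"
  shows "(\<Sum>i\<le>n. \<bar>poly (lagrange_basis (cheb_node n) n i) (- u)\<bar>) = cheb_T n u"
proof -
  let ?L = "\<lambda>i. poly (lagrange_basis (cheb_node n) n i) (- u)"
  have "poly (cheb_poly n) (- u) = (\<Sum>i\<le>n. poly (cheb_poly n) (cheb_node n i) * ?L i)"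
    by (subst lagrange_interpolation[OF inj_on_cheb_node degree_cheb_poly])
      (simp add: poly_sum)
  also have "\<dots> = (\<Sum>i\<le>n. (-1) ^ i * ?L i)"
    by (simp add: poly_cheb_poly_cheb_node)
  finally have interpolation: "(-1) ^ n * cheb_T n u = (\<Sum>i\<le>n. (-1) ^ i * ?L i)"
    using assms poly_cheb_poly_eq_cheb_T[of "- u" n] by (simp add: cheb_T_minus)
  have left: "- u < cheb_node n j" for j
    unfolding cheb_node_def using assms cos_ge_minus_one[of "real j * pi / real n"] by linarith
  have "\<bar>?L i\<bar> = (-1) ^ n * ((-1) ^ i * ?L i)" if "i \<le> n" for i
  proof -
    have "\<bar>?L i\<bar> = \<bar>(-1) ^ (n - i) * ?L i\<bar>"
      by (simp add: abs_mult)
    also have "\<dots> = (-1) ^ (n - i) * ?L i"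
      using that by (intro abs_of_nonneg lagrange_basis_sign_left cheb_node_strict_decreasing left)
    also have "(-1 :: real) ^ (n - i) = (-1) ^ n * (-1) ^ i"
      using that by (simp add: power_diff minus_one_power_iff)
    finally show ?thesis
      by (simp add: mult_ac)
  qed
  then have "(\<Sum>i\<le>n. \<bar>?L i\<bar>) = (-1) ^ n * (\<Sum>i\<le>n. (-1) ^ i * ?L i)"
    by (simp add: sum_distrib_left)
  then show ?thesis
    by (simp flip: interpolation)
qed

definition scaled_cheb_node :: "real \<Rightarrow> real \<Rightarrow> nat \<Rightarrow> nat \<Rightarrow> real" where
  "scaled_cheb_node A B n i = (B - A) / 2 * cheb_node n i + (B + A) / 2"

lemma scaled_cheb_node_mem:
  assumes "A \<le> B"
  shows "scaled_cheb_node A B n i \<in> {A..B}"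
proof -
  have "(B - A) / 2 * (-1) \<le> (B - A) / 2 * cheb_node n i" "(B - A) / 2 * cheb_node n i \<le> (B - A) / 2 * 1"
    using assms by (intro mult_left_mono; simp add: cheb_node_def)+
  then show ?thesis
    by (simp add: scaled_cheb_node_def field_simps)
qed

lemma inj_on_scaled_cheb_node:
  assumes "A < B"
  shows "inj_on (scaled_cheb_node A B n) {..n}"
  using inj_on_cheb_node assms by (auto simp: inj_on_def scaled_cheb_node_def)

lemma sum_abs_coeff_lagrange_scaled_cheb_node:
  assumes "0 < A" "A < B"
  shows "(\<Sum>i\<le>n. \<Sum>l\<le>n. \<bar>coeff (lagrange_basis (scaled_cheb_node A B n) n i) l\<bar>)
           = cheb_T n ((B + A + 2) / (B - A))"
proof -
  define u where "u = (B + A + 2) / (B - A)"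
  have u: "1 < u"
    using assms by (simp add: u_def field_simps)
  have scaled: "scaled_cheb_node A B n = (\<lambda>j. (B - A) / 2 * cheb_node n j + (B + A) / 2)"
    by (simp add: fun_eq_iff scaled_cheb_node_def)
  have minus_one: "-1 = (B - A) / 2 * (- u) + (B + A) / 2"
    using assms by (simp add: u_def field_simps)
  have "(\<Sum>l\<le>n. \<bar>coeff (lagrange_basis (scaled_cheb_node A B n) n i) l\<bar>)
          = \<bar>poly (lagrange_basis (cheb_node n) n i) (- u)\<bar>" if "i \<le> n" for i
  proof -
    have "0 \<le> scaled_cheb_node A B n j" for j
      using scaled_cheb_node_mem[of A B n j] assms by simp
    then have "(\<Sum>l\<le>n. \<bar>coeff (lagrange_basis (scaled_cheb_node A B n) n i) l\<bar>)
          = \<bar>poly (lagrange_basis (scaled_cheb_node A B n) n i) (-1)\<bar>"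
      using that by (intro sum_abs_coeff_lagrange_basis)
    also have "\<dots> = \<bar>poly (lagrange_basis (cheb_node n) n i) (- u)\<bar>"
      using assms by (subst minus_one, unfold scaled, subst poly_lagrange_basis_affine) simp_all
    finally show ?thesis .
  qed
  then show ?thesis
    using sum_abs_lagrange_cheb_node[OF u] by (simp add: u_def)
qed

section \<open>Polynomials in several variables\<close>

lemma mpoly_coeff_eq_sum_values:
  fixes y :: "nat \<Rightarrow> real" and a :: "nat \<Rightarrow> nat \<Rightarrow> real"
  assumes dual: "\<And>k l. k \<le> n \<Longrightarrow> l \<le> n \<Longrightarrow>
      (\<Sum>i\<le>n. y i ^ k * a i l) = (if k = l then 1 else 0)"
    \<comment> \<open>\<open>a\<close> is the inverse of the Vandermonde matrix \<open>(y i ^ k)\<close>\<close>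
    and l: "l \<in> multi_idx m n"
  shows "c l = (\<Sum>g\<in>multi_idx m n. mpoly_eval m n c (restrict (\<lambda>j. y (g j)) {..<m})
                 * of_real (\<Prod>j<m. a (g j) (l j)))"
proof -
  let ?I = "multi_idx m n"
  have "(\<Sum>g\<in>?I. mpoly_eval m n c (restrict (\<lambda>j. y (g j)) {..<m}) * of_real (\<Prod>j<m. a (g j) (l j)))
      = (\<Sum>g\<in>?I. \<Sum>k\<in>?I. c k * of_real (\<Prod>j<m. y (g j) ^ k j * a (g j) (l j)))"
    unfolding mpoly_eval_def by (simp add: sum_distrib_right prod.distrib mult.assoc)
  also have "\<dots> = (\<Sum>k\<in>?I. c k * of_real (\<Sum>g\<in>?I. \<Prod>j<m. y (g j) ^ k j * a (g j) (l j)))"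
    by (subst sum.swap) (simp add: sum_distrib_left)
  also have "\<dots> = (\<Sum>k\<in>?I. c k * of_real (\<Prod>j<m. \<Sum>i\<le>n. y i ^ k j * a i (l j)))"
    unfolding multi_idx_def by (subst prod_sum_PiE) auto
  also have "\<dots> = (\<Sum>k\<in>?I. if k = l then c k else 0)"
  proof (rule sum.cong[OF refl])
    fix k assume k: "k \<in> ?I"
    have "(\<Prod>j<m. \<Sum>i\<le>n. y i ^ k j * a i (l j)) = (\<Prod>j<m. if k j = l j then 1 else 0)"
      using k l by (intro prod.cong refl dual) (auto simp: multi_idx_def)
    also have "\<dots> = (if \<forall>j<m. k j = l j then 1 else 0)"
      by auto
    also have "(\<forall>j<m. k j = l j) \<longleftrightarrow> k = l"
      using k l unfolding multi_idx_def by (auto intro: PiE_ext)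
    finally show "c k * of_real (\<Prod>j<m. \<Sum>i\<le>n. y i ^ k j * a i (l j)) = (if k = l then c k else 0)"
      by simp
  qed
  also have "\<dots> = c l"
    using l by (simp add: multi_idx_def finite_PiE)
  finally show ?thesis ..
qed

lemma sum_norm_coeffs_le_values:
  fixes y :: "nat \<Rightarrow> real" and a :: "nat \<Rightarrow> nat \<Rightarrow> real"
  assumes dual: "\<And>k l. k \<le> n \<Longrightarrow> l \<le> n \<Longrightarrow>
      (\<Sum>i\<le>n. y i ^ k * a i l) = (if k = l then 1 else 0)"
    and bound: "\<And>g. g \<in> multi_idx m n \<Longrightarrow>
      cmod (mpoly_eval m n c (restrict (\<lambda>j. y (g j)) {..<m})) \<le> M"
  shows "(\<Sum>k\<in>multi_idx m n. cmod (c k)) \<le> (\<Sum>i\<le>n. \<Sum>l\<le>n. \<bar>a i l\<bar>) ^ m * M"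
proof -
  let ?I = "multi_idx m n"
  let ?U = "\<lambda>g. mpoly_eval m n c (restrict (\<lambda>j. y (g j)) {..<m})"
  have "(\<Sum>l\<in>?I. cmod (c l)) \<le> (\<Sum>l\<in>?I. \<Sum>g\<in>?I. cmod (?U g) * (\<Prod>j<m. \<bar>a (g j) (l j)\<bar>))"
  proof (rule sum_mono)
    fix l assume "l \<in> ?I"
    have "cmod (c l) = cmod (\<Sum>g\<in>?I. ?U g * of_real (\<Prod>j<m. a (g j) (l j)))"
      using mpoly_coeff_eq_sum_values[OF dual \<open>l \<in> ?I\<close>] by (rule arg_cong)
    also have "\<dots> \<le> (\<Sum>g\<in>?I. cmod (?U g) * (\<Prod>j<m. \<bar>a (g j) (l j)\<bar>))"
      by (rule order_trans[OF norm_sum]) (simp add: norm_mult abs_prod del: of_real_prod)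
    finally show "cmod (c l) \<le> (\<Sum>g\<in>?I. cmod (?U g) * (\<Prod>j<m. \<bar>a (g j) (l j)\<bar>))" .
  qed
  also have "\<dots> \<le> (\<Sum>l\<in>?I. \<Sum>g\<in>?I. M * (\<Prod>j<m. \<bar>a (g j) (l j)\<bar>))"
    using bound by (intro sum_mono mult_right_mono) (simp_all add: prod_nonneg)
  also have "\<dots> = M * (\<Sum>g\<in>?I. \<Sum>l\<in>?I. \<Prod>j<m. \<bar>a (g j) (l j)\<bar>)"
    by (subst sum.swap) (simp add: sum_distrib_left)
  also have "(\<Sum>g\<in>?I. \<Sum>l\<in>?I. \<Prod>j<m. \<bar>a (g j) (l j)\<bar>) = (\<Sum>g\<in>?I. \<Prod>j<m. \<Sum>l\<le>n. \<bar>a (g j) l\<bar>)"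
    unfolding multi_idx_def by (subst prod_sum_PiE) auto
  also have "\<dots> = (\<Prod>j<m. \<Sum>i\<le>n. \<Sum>l\<le>n. \<bar>a i l\<bar>)"
    unfolding multi_idx_def by (subst prod_sum_PiE) auto
  finally show ?thesis
    by (simp add: mult.commute)
qed

lemma norm_mpoly_eval_le:
  assumes "\<And>j. j < m \<Longrightarrow> \<bar>z j\<bar> \<le> R"
  shows "cmod (mpoly_eval m n c z) \<le> (\<Sum>k\<in>multi_idx m n. cmod (c k)) * max 1 R ^ (n * m)"
proof -
  have "cmod (\<Prod>j<m. complex_of_real (z j ^ k j)) \<le> max 1 R ^ (n * m)" if "k \<in> multi_idx m n" for k
  proof -
    have "(\<Prod>j<m. \<bar>z j\<bar> ^ k j) \<le> (\<Prod>j<m. max 1 R ^ n)"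
    proof (rule prod_mono)
      fix j assume "j \<in> {..<m}"
      then have "\<bar>z j\<bar> \<le> max 1 R" "k j \<le> n"
        using assms that by (auto simp: multi_idx_def le_max_iff_disj)
      then have "\<bar>z j\<bar> ^ k j \<le> max 1 R ^ k j" "max 1 R ^ k j \<le> max 1 R ^ n"
        by (auto intro!: power_mono power_increasing)
      then show "0 \<le> \<bar>z j\<bar> ^ k j \<and> \<bar>z j\<bar> ^ k j \<le> max 1 R ^ n"
        by simp
    qed
    then show ?thesis
      by (simp add: prod_norm[symmetric] norm_power power_mult)
  qed
  then have "cmod (mpoly_eval m n c z) \<le> (\<Sum>k\<in>multi_idx m n. cmod (c k) * max 1 R ^ (n * m))"
    unfolding mpoly_eval_def
    by (intro order_trans[OF norm_sum] sum_mono) (simp add: norm_mult mult_left_mono)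
  then show ?thesis
    by (simp add: sum_distrib_right)
qed

lemma norm_le_sup_norm:
  assumes "z \<in> cube m A B"
  shows "cmod (mpoly_eval m n c z) \<le> sup_norm (mpoly_eval m n c) (cube m A B)"
  unfolding sup_norm_def
proof (rule cSup_upper)
  show "cmod (mpoly_eval m n c z) \<in> (\<lambda>y. cmod (mpoly_eval m n c y)) ` cube m A B"
    using assms by simp
  show "bdd_above ((\<lambda>y. cmod (mpoly_eval m n c y)) ` cube m A B)"
  proof (rule bdd_aboveI2)
    fix y assume y: "y \<in> cube m A B"
    have "\<bar>y j\<bar> \<le> max \<bar>A\<bar> \<bar>B\<bar>" if "j < m" for j
    proof -
      have "A \<le> y j \<and> y j \<le> B"
        using y that by (simp add: cube_def PiE_iff)
      then show ?thesis
        by linarith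
    qed
    then show "cmod (mpoly_eval m n c y)
        \<le> (\<Sum>k\<in>multi_idx m n. cmod (c k)) * max 1 (max \<bar>A\<bar> \<bar>B\<bar>) ^ (n * m)"
      by (rule norm_mpoly_eval_le)
  qed
qed

lemma sup_norm_nonneg:
  assumes "A \<le> B"
  shows "0 \<le> sup_norm (mpoly_eval m n c) (cube m A B)"
proof -
  have "restrict (\<lambda>_. A) {..<m} \<in> cube m A B"
    using assms by (simp add: cube_def)
  then show ?thesis
    by (rule order_trans[OF norm_ge_zero norm_le_sup_norm])
qed

lemma sum_norm_coeffs_le_cheb_T:
  assumes "0 < A" "A < B"
  shows "(\<Sum>k\<in>multi_idx m n. cmod (c k))
           \<le> cheb_T n ((B + A + 2) / (B - A)) ^ m * sup_norm (mpoly_eval m n c) (cube m A B)"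
proof -
  let ?y = "scaled_cheb_node A B n"
  have "(\<Sum>k\<in>multi_idx m n. cmod (c k))
      \<le> (\<Sum>i\<le>n. \<Sum>l\<le>n. \<bar>coeff (lagrange_basis ?y n i) l\<bar>) ^ m
         * sup_norm (mpoly_eval m n c) (cube m A B)"
  proof (rule sum_norm_coeffs_le_values)
    show "(\<Sum>i\<le>n. ?y i ^ k * coeff (lagrange_basis ?y n i) l) = (if k = l then 1 else 0)"
      if "k \<le> n" for k l
      using assms that by (intro sum_power_mult_coeff_lagrange_basis inj_on_scaled_cheb_node)
    show "cmod (mpoly_eval m n c (restrict (\<lambda>j. ?y (g j)) {..<m}))
          \<le> sup_norm (mpoly_eval m n c) (cube m A B)" for g
      using assms scaled_cheb_node_mem[of A B n] by (intro norm_le_sup_norm) (auto simp: cube_def)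
  qed
  then show ?thesis
    using assms by (simp add: sum_abs_coeff_lagrange_scaled_cheb_node)
qed

theorem lemmaL2p6:
  fixes m n :: nat and c :: "(nat \<Rightarrow> nat) \<Rightarrow> complex"
  shows "(\<forall>A B :: real. 0 < A \<and> A < B \<longrightarrow>
            (\<Sum>k\<in>multi_idx m n. cmod (c k))
              \<le> (cheb_T n ((B + A + 2) / (B - A))) ^ m
                 * sup_norm (mpoly_eval m n c) (cube m A B))
       \<and> (\<forall>b :: real. 0 < b \<longrightarrow>
            (\<Sum>k\<in>multi_idx m n. cmod (c k))
              \<le> ((exp (b/4) + exp (-(b/4))) / (exp (b/4) - exp (-(b/4)))) ^ (m * n)
                 * sup_norm (mpoly_eval m n c) (cube m (exp (-b)) (exp b)))"
proof (intro conjI allI impI)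
  fix A B :: real
  assume "0 < A \<and> A < B"
  then show "(\<Sum>k\<in>multi_idx m n. cmod (c k))
      \<le> (cheb_T n ((B + A + 2) / (B - A))) ^ m * sup_norm (mpoly_eval m n c) (cube m A B)"
    by (intro sum_norm_coeffs_le_cheb_T) auto
next
  fix b :: real
  assume "0 < b"
  let ?S = "sup_norm (mpoly_eval m n c) (cube m (exp (-b)) (exp b))"
  have "(exp b + exp (-b) + 2) / (exp b - exp (-b)) = (cosh b + 1) / sinh b"
    by (simp add: cosh_field_def sinh_field_def field_split_simps)
  also have "\<dots> = cosh (b / 2) / sinh (b / 2)"
    using \<open>0 < b\<close> by (simp add: cosh_plus_one_div_sinh)
  finally have "(\<Sum>k\<in>multi_idx m n. cmod (c k)) \<le> cheb_T n (cosh (b / 2) / sinh (b / 2)) ^ m * ?S"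
    using sum_norm_coeffs_le_cheb_T[of "exp (-b)" "exp b"] \<open>0 < b\<close> by simp
  also have "\<dots> \<le> ((cosh (b / 4) / sinh (b / 4)) ^ n) ^ m * ?S"
    using \<open>0 < b\<close> cheb_T_coth_le[of "b / 2" n] sup_norm_nonneg[of "exp (-b)" "exp b"]
    by (intro mult_right_mono power_mono cheb_T_nonneg one_le_coth) simp_all
  finally show "(\<Sum>k\<in>multi_idx m n. cmod (c k))
      \<le> ((exp (b/4) + exp (-(b/4))) / (exp (b/4) - exp (-(b/4)))) ^ (m * n) * ?S"
    by (simp add: coth_eq_exp mult.commute[of m n] power_mult)
qed

end
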